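(* Every tree converges to the empty graph under the operator $KB_e$; that is, for every tree $T$ there is $m$ such that $KB_e^k(T)$ is the empty graph for all $k\ge m$.
   Context: All graphs are finite, simple and undirected. A biclique of a graph $G$ is a maximal (with respect to inclusion) induced subgraph of $G$ that is a complete bipartite graph $K_{p,q}$ with $p,q\ge 1$. The edge-biclique graph $KB_e(G)$ is the graph with one vertex for each biclique of $G$, in which two distinct vertices are adjacent if and only if the corresponding bicliques have at least one edge in common; if $G$ has no bicliques (e.g. $G$ has no edges), $KB_e(G)$ is the empty graph (no vertices). Iterates: $KB_e^0(G)=G$, $KB_e^k(G)=KB_e(KB_e^{k-1}(G))$. *)

theory Defs
  imports Main
begin

text \<open>A finite simple graph: a vertex set together with a set of 2-element edges.\<close>
type_synonym 'a graph = "'a set \<times> 'a set set"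

definition verts :: "'a graph \<Rightarrow> 'a set" where "verts G = fst G"
definition edges :: "'a graph \<Rightarrow> 'a set set" where "edges G = snd G"

definition adj :: "'a graph \<Rightarrow> 'a \<Rightarrow> 'a \<Rightarrow> bool" where
  "adj G u v \<longleftrightarrow> {u, v} \<in> edges G"

definition wf_graph :: "'a graph \<Rightarrow> bool" where
  "wf_graph G \<longleftrightarrow> finite (verts G) \<and>
     (\<forall>e\<in>edges G. \<exists>u v. u \<noteq> v \<and> e = {u, v} \<and> u \<in> verts G \<and> v \<in> verts G)"

definition connected_graph :: "'a graph \<Rightarrow> bool" where
  "connected_graph G \<longleftrightarrow>
     (\<forall>u\<in>verts G. \<forall>v\<in>verts G. (u, v) \<in> {(x, y). adj G x y}\<^sup>*)"

definition is_cycle :: "'a graph \<Rightarrow> 'a list \<Rightarrow> bool" where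
  "is_cycle G cs \<longleftrightarrow> length cs \<ge> 3 \<and> distinct cs \<and> set cs \<subseteq> verts G \<and>
     (\<forall>i. Suc i < length cs \<longrightarrow> adj G (cs ! i) (cs ! Suc i)) \<and>
     adj G (last cs) (hd cs)"

definition acyclic_graph :: "'a graph \<Rightarrow> bool" where
  "acyclic_graph G \<longleftrightarrow> (\<nexists>cs. is_cycle G cs)"

definition is_tree :: "'a graph \<Rightarrow> bool" where
  "is_tree G \<longleftrightarrow> wf_graph G \<and> verts G \<noteq> {} \<and> connected_graph G \<and> acyclic_graph G"

definition induces_complete_bipartite :: "'a graph \<Rightarrow> 'a set \<Rightarrow> bool" where
  "induces_complete_bipartite G S \<longleftrightarrow> S \<subseteq> verts G \<and>
     (\<exists>A B. A \<noteq> {} \<and> B \<noteq> {} \<and> A \<inter> B = {} \<and> A \<union> B = S \<and>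
        (\<forall>a\<in>A. \<forall>b\<in>B. adj G a b) \<and>
        (\<forall>a\<in>A. \<forall>a'\<in>A. \<not> adj G a a') \<and>
        (\<forall>b\<in>B. \<forall>b'\<in>B. \<not> adj G b b'))"

definition is_biclique :: "'a graph \<Rightarrow> 'a set \<Rightarrow> bool" where
  "is_biclique G S \<longleftrightarrow> induces_complete_bipartite G S \<and>
     (\<forall>S'. S \<subset> S' \<longrightarrow> \<not> induces_complete_bipartite G S')"

definition share_edge :: "'a graph \<Rightarrow> 'a set \<Rightarrow> 'a set \<Rightarrow> bool" where
  "share_edge G S S' \<longleftrightarrow> (\<exists>e\<in>edges G. e \<subseteq> S \<and> e \<subseteq> S')"

definition KBe_raw :: "'a graph \<Rightarrow> 'a set graph" where
  "KBe_raw G = ({S. is_biclique G S},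
     {{S, S'} | S S'. S \<noteq> S' \<and> is_biclique G S \<and> is_biclique G S' \<and> share_edge G S S'})"

text \<open>To iterate we relabel vertices (finite sets of naturals) injectively by
  naturals via the binary encoding; this is a graph isomorphism.\<close>
definition enc :: "nat set \<Rightarrow> nat" where
  "enc S = (\<Sum>i\<in>S. 2 ^ i)"

definition map_graph :: "('a \<Rightarrow> 'b) \<Rightarrow> 'a graph \<Rightarrow> 'b graph" where
  "map_graph f G = (f ` verts G, (\<lambda>e. f ` e) ` edges G)"

definition KBe :: "nat graph \<Rightarrow> nat graph" where
  "KBe G = map_graph enc (KBe_raw G)"

definition empty_graph :: "'a graph \<Rightarrow> bool" where
  "empty_graph G \<longleftrightarrow> verts G = {}"

end

theory Submission
  imports Defs "HOL-Library.Nat_Bijection"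
begin

text \<open>In a forest there are no triangles and no 4-cycles, so every biclique is a star: it is the
  closed neighbourhood of a unique non-isolated vertex, its centre. Two bicliques share an edge
  exactly when their centres are adjacent, so taking centres embeds \<open>KB\<^sub>e(G)\<close> into \<open>G\<close>
  as an induced subgraph; in particular \<open>KB\<^sub>e(G)\<close> is again a forest. Moreover a leaf and its
  neighbour cannot both be centres, so \<open>KB\<^sub>e(G)\<close> has fewer vertices than \<open>G\<close>. Iterating,
  \<open>KB\<^sub>e\<^sup>k(T)\<close> is empty as soon as \<open>k\<close> reaches the order of the tree \<open>T\<close>.\<close>

lemma adj_commute: "adj G u v \<longleftrightarrow> adj G v u"
  by (simp add: adj_def insert_commute)

lemma adj_irrefl: "wf_graph G \<Longrightarrow> \<not> adj G u u"
  unfolding wf_graph_def adj_def by (metis doubleton_eq_iff insert_absorb2)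

lemma adj_in_verts: "wf_graph G \<Longrightarrow> adj G u v \<Longrightarrow> u \<in> verts G \<and> v \<in> verts G"
  unfolding wf_graph_def adj_def by (metis doubleton_eq_iff)

lemma finite_verts: "wf_graph G \<Longrightarrow> finite (verts G)"
  unfolding wf_graph_def by blast

lemma edgeE:
  assumes "wf_graph G" "e \<in> edges G"
  obtains u v where "u \<noteq> v" "e = {u, v}" "u \<in> verts G" "v \<in> verts G"
  using assms unfolding wf_graph_def by blast

section \<open>Paths and cycles\<close>

definition is_path :: "'a graph \<Rightarrow> 'a list \<Rightarrow> bool" where
  "is_path G p \<longleftrightarrow> distinct p \<and> set p \<subseteq> verts G \<and>
     (\<forall>i. Suc i < length p \<longrightarrow> adj G (p ! i) (p ! Suc i))"

lemma is_cycle_iff_path: "is_cycle G cs \<longleftrightarrow> length cs \<ge> 3 \<and> is_path G cs \<and> adj G (last cs) (hd cs)"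
  unfolding is_cycle_def is_path_def by blast

lemma is_path_Cons:
  assumes "is_path G p" "p \<noteq> []" "x \<notin> set p" "x \<in> verts G" "adj G x (hd p)"
  shows "is_path G (x # p)"
  unfolding is_path_def
proof (intro conjI allI impI)
  fix i assume "Suc i < length (x # p)"
  then show "adj G ((x # p) ! i) ((x # p) ! Suc i)"
    using assms by (cases i) (auto simp: is_path_def hd_conv_nth)
qed (use assms in \<open>auto simp: is_path_def\<close>)

lemma length_path_le_card:
  assumes "wf_graph G" "is_path G p"
  shows "length p \<le> card (verts G)"
  using assms distinct_card[of p] card_mono[OF finite_verts, of G "set p"]
  unfolding is_path_def by simp

lemma is_cycle_take_path:
  assumes "is_path G p" "2 \<le> i" "i < length p" "adj G (p ! i) (p ! 0)"
  shows "is_cycle G (take (Suc i) p)"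
  unfolding is_cycle_iff_path
proof (intro conjI)
  show "is_path G (take (Suc i) p)"
    using assms(1) set_take_subset[of "Suc i" p] unfolding is_path_def by fastforce
  have "last (take (Suc i) p) = p ! i"
    using assms(3) by (simp add: take_Suc_conv_app_nth)
  moreover have "hd (take (Suc i) p) = p ! 0"
    using assms(3) by (cases p) auto
  ultimately show "adj G (last (take (Suc i) p)) (hd (take (Suc i) p))"
    using assms(4) by simp
qed (use assms in simp)

lemma acyclic_no_triangle:
  assumes wf: "wf_graph G" and ac: "acyclic_graph G"
    and "adj G a b" "adj G b c" "adj G c a"
  shows False
proof -
  have "a \<noteq> b" "b \<noteq> c" "a \<noteq> c"
    using adj_irrefl[OF wf] assms(3-5) adj_commute by metis+
  then have "is_cycle G [a, b, c]"
    using assms(3-5) adj_in_verts[OF wf] by (auto simp: is_cycle_def less_Suc_eq)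
  then show False using ac unfolding acyclic_graph_def by blast
qed

lemma acyclic_no_square:
  assumes wf: "wf_graph G" and ac: "acyclic_graph G"
    and ne: "a \<noteq> a'" "b \<noteq> b'" "a \<noteq> b" "a \<noteq> b'" "a' \<noteq> b" "a' \<noteq> b'"
    and e: "adj G a b" "adj G b a'" "adj G a' b'" "adj G b' a"
  shows False
proof -
  have "is_cycle G [a, b, a', b']"
    unfolding is_cycle_def
  proof (intro conjI allI impI)
    fix i assume "Suc i < length [a, b, a', b']"
    then have "i = 0 \<or> i = 1 \<or> i = 2" by auto
    then show "adj G ([a, b, a', b'] ! i) ([a, b, a', b'] ! Suc i)" using e by auto
  qed (use ne e adj_in_verts[OF wf] in auto)
  then show False using ac unfolding acyclic_graph_def by blast
qed

lemma acyclic_graph_inj_hom: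
  assumes ac: "acyclic_graph G"
    and inj: "inj_on h (verts H)" and into: "h ` verts H \<subseteq> verts G"
    and hom: "\<And>x y. x \<in> verts H \<Longrightarrow> y \<in> verts H \<Longrightarrow> adj H x y \<Longrightarrow> adj G (h x) (h y)"
  shows "acyclic_graph H"
  unfolding acyclic_graph_def
proof
  assume "\<exists>cs. is_cycle H cs"
  then obtain cs where cs: "is_cycle H cs" by blast
  then have sub: "set cs \<subseteq> verts H" and ne: "cs \<noteq> []" unfolding is_cycle_def by auto
  have hom_cs: "adj G (h x) (h y)" if "x \<in> set cs" "y \<in> set cs" "adj H x y" for x y
    using hom that sub by blast
  have "is_cycle G (map h cs)"
    unfolding is_cycle_def
  proof (intro conjI allI impI)
    show "distinct (map h cs)"
      using cs inj_on_subset[OF inj sub] unfolding is_cycle_def distinct_map by blast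
    show "set (map h cs) \<subseteq> verts G" using sub into by auto
    fix i assume "Suc i < length (map h cs)"
    then show "adj G (map h cs ! i) (map h cs ! Suc i)"
      using cs hom_cs[of "cs ! i" "cs ! Suc i"] unfolding is_cycle_def by simp
  next
    show "adj G (last (map h cs)) (hd (map h cs))"
      using cs ne hom_cs[of "last cs" "hd cs"] unfolding is_cycle_def by (simp add: last_map hd_map)
  qed (use cs in \<open>simp add: is_cycle_def\<close>)
  then show False using ac unfolding acyclic_graph_def by blast
qed

lemma induces_complete_bipartiteI:
  assumes "A \<union> B \<subseteq> verts G" "A \<noteq> {}" "B \<noteq> {}" "A \<inter> B = {}"
    and "\<And>a b. a \<in> A \<Longrightarrow> b \<in> B \<Longrightarrow> adj G a b"
    and "\<And>a a'. a \<in> A \<Longrightarrow> a' \<in> A \<Longrightarrow> \<not> adj G a a'"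
    and "\<And>b b'. b \<in> B \<Longrightarrow> b' \<in> B \<Longrightarrow> \<not> adj G b b'"
  shows "induces_complete_bipartite G (A \<union> B)"
  unfolding induces_complete_bipartite_def
  by (intro conjI, use assms in blast, rule exI[of _ A], rule exI[of _ B]) (use assms in blast)

section \<open>Bicliques of a forest\<close>

definition closed_nbhd :: "'a graph \<Rightarrow> 'a \<Rightarrow> 'a set" where
  "closed_nbhd G c = insert c {x. adj G c x}"

context
  fixes G :: "'a graph"
  assumes wf: "wf_graph G" and ac: "acyclic_graph G"
begin

lemma exists_leaf:
  assumes "edges G \<noteq> {}"
  shows "\<exists>l u. adj G l u \<and> (\<forall>x. adj G l x \<longrightarrow> x = u)"
proof -
  define P where "P p \<longleftrightarrow> is_path G p \<and> 2 \<le> length p" for p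
  obtain e where "e \<in> edges G" using assms by blast
  then obtain a b where "a \<noteq> b" "adj G a b"
    using edgeE[OF wf] unfolding adj_def by metis
  then have "P [a, b]"
    using adj_in_verts[OF wf] unfolding P_def is_path_def by (auto simp: less_Suc_eq)
  moreover have "\<forall>p. P p \<longrightarrow> length p < card (verts G) + 1"
    using length_path_le_card[OF wf] unfolding P_def by fastforce
  ultimately obtain p where p: "is_path G p" "2 \<le> length p"
    and longest: "\<And>q. is_path G q \<Longrightarrow> 2 \<le> length q \<Longrightarrow> length q \<le> length p"
    using ex_has_greatest_nat[of P "[a, b]" length] unfolding P_def by blast
  have "x = p ! 1" if x: "adj G (p ! 0) x" for x
  proof (cases "x \<in> set p")
    case True
    then obtain i where i: "i < length p" "x = p ! i" by (metis in_set_conv_nth)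
    have "i \<noteq> 0" using i x adj_irrefl[OF wf] by metis
    moreover have "\<not> 2 \<le> i"
    proof
      assume "2 \<le> i"
      moreover have "adj G (p ! i) (p ! 0)" using x i adj_commute by metis
      ultimately have "is_cycle G (take (Suc i) p)" by (rule is_cycle_take_path[OF p(1) _ i(1)])
      then show False using ac unfolding acyclic_graph_def by blast
    qed
    ultimately have "i = 1" by linarith
    then show ?thesis using i by simp
  next
    case False
    have "p \<noteq> []" "hd p = p ! 0" using p(2) by (cases p, auto)+
    moreover have "adj G x (p ! 0)" using x adj_commute by metis
    ultimately have "is_path G (x # p)"
      using is_path_Cons[OF p(1) _ False] adj_in_verts[OF wf x] by metis
    then show ?thesis using longest[of "x # p"] p(2) by simp
  qed
  moreover have "adj G (p ! 0) (p ! 1)" using p unfolding is_path_def by simp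
  ultimately show ?thesis by blast
qed

lemma complete_bipartite_in_star:
  assumes "induces_complete_bipartite G S"
  shows "\<exists>c\<in>S. S \<subseteq> closed_nbhd G c"
proof -
  obtain A B where AB: "A \<noteq> {}" "B \<noteq> {}" "A \<inter> B = {}" "A \<union> B = S"
    and full: "\<forall>a\<in>A. \<forall>b\<in>B. adj G a b"
    using assms unfolding induces_complete_bipartite_def by blast
  obtain a b where ab: "a \<in> A" "b \<in> B" using AB by blast
  show ?thesis
  proof (cases "A = {a}")
    case True
    then have "S \<subseteq> closed_nbhd G a" using AB full unfolding closed_nbhd_def by auto
    then show ?thesis using ab AB by blast
  next
    case False
    then obtain a' where a': "a' \<in> A" "a' \<noteq> a" using ab by blast
    have "B = {b}"
    proof (rule ccontr)
      assume "B \<noteq> {b}"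
      then obtain b' where b': "b' \<in> B" "b' \<noteq> b" using ab by blast
      have "adj G a b" "adj G a' b'" "adj G b a'" "adj G b' a"
        using full ab a' b' adj_commute by metis+
      moreover have "a \<noteq> b" "a \<noteq> b'" "a' \<noteq> b" "a' \<noteq> b'"
        using AB(3) ab a' b' by blast+
      ultimately show False using acyclic_no_square[OF wf ac] a' b' by metis
    qed
    moreover have "\<forall>x\<in>A. adj G b x" using full ab adj_commute by metis
    ultimately have "S \<subseteq> closed_nbhd G b"
      using AB unfolding closed_nbhd_def by auto
    then show ?thesis using ab AB by blast
  qed
qed

lemma complete_bipartite_star:
  assumes "adj G c x"
  shows "induces_complete_bipartite G (closed_nbhd G c)"
proof -
  let ?N = "{x. adj G c x}"
  have "induces_complete_bipartite G ({c} \<union> ?N)"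
  proof (rule induces_complete_bipartiteI)
    show "{c} \<union> ?N \<subseteq> verts G" using adj_in_verts[OF wf] assms by auto
    show "?N \<noteq> {}" using assms by blast
    show "{c} \<inter> ?N = {}" using adj_irrefl[OF wf] by blast
    show "\<not> adj G a a'" if "a \<in> {c}" "a' \<in> {c}" for a a'
      using that adj_irrefl[OF wf] by blast
    show "\<not> adj G b b'" if "b \<in> ?N" "b' \<in> ?N" for b b'
    proof -
      have "adj G c b" "adj G b' c" using that by (simp_all add: adj_commute[of G b' c])
      then show ?thesis using acyclic_no_triangle[OF wf ac, of c b b'] by blast
    qed
  qed auto
  moreover have "{c} \<union> ?N = closed_nbhd G c" unfolding closed_nbhd_def by blast
  ultimately show ?thesis by simp
qed

lemma biclique_eq_star:
  assumes "is_biclique G S"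
  shows "\<exists>c. S = closed_nbhd G c \<and> (\<exists>x. adj G c x)"
proof -
  have cb: "induces_complete_bipartite G S" using assms is_biclique_def by blast
  obtain c where c: "c \<in> S" "S \<subseteq> closed_nbhd G c" using complete_bipartite_in_star[OF cb] by blast
  obtain y where "y \<in> S" "y \<noteq> c"
    using cb unfolding induces_complete_bipartite_def by blast
  then have cy: "adj G c y" using c unfolding closed_nbhd_def by auto
  then have "S = closed_nbhd G c"
    using c complete_bipartite_star assms unfolding is_biclique_def by blast
  then show ?thesis using cy by blast
qed

definition biclique_centre :: "'a set \<Rightarrow> 'a" where
  "biclique_centre S = (SOME c. S = closed_nbhd G c \<and> (\<exists>x. adj G c x))"

lemma biclique_centre:
  assumes "is_biclique G S"
  shows "S = closed_nbhd G (biclique_centre S)" "\<exists>x. adj G (biclique_centre S) x"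
  using someI_ex[OF biclique_eq_star[OF assms]] unfolding biclique_centre_def by blast+

lemma biclique_centre_in_verts: "is_biclique G S \<Longrightarrow> biclique_centre S \<in> verts G"
  using biclique_centre(2) adj_in_verts[OF wf] by blast

lemma inj_on_biclique_centre: "inj_on biclique_centre {S. is_biclique G S}"
  by (rule inj_onI) (metis biclique_centre(1) mem_Collect_eq)

text \<open>A shared edge \<open>{x, y}\<close> lies in both stars; since there are no triangles, each
  centre is an endpoint of it.\<close>

lemma share_edge_centres_adj:
  assumes "S \<noteq> S'" "S = closed_nbhd G c" "S' = closed_nbhd G c'" "share_edge G S S'"
  shows "adj G c c'"
proof -
  obtain e where e: "e \<in> edges G" "e \<subseteq> S" "e \<subseteq> S'"
    using assms(4) unfolding share_edge_def by blast
  then obtain x y where "e = {x, y}" using edgeE[OF wf] by metis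
  then have xy: "{x, y} \<in> edges G" "{x, y} \<subseteq> S" "{x, y} \<subseteq> S'" using e by blast+
  have axy: "adj G x y" using xy(1) by (simp add: adj_def)
  have centre: "d \<in> {x, y}" if "{x, y} \<subseteq> closed_nbhd G d" for d
  proof (rule ccontr)
    assume "d \<notin> {x, y}"
    then have "adj G d x" "adj G y d"
      using that by (auto simp: closed_nbhd_def adj_commute[of G y d])
    then show False using acyclic_no_triangle[OF wf ac] axy by blast
  qed
  have "c \<in> {x, y}" "c' \<in> {x, y}" using centre xy assms(2,3) by simp_all
  moreover have "c \<noteq> c'" using assms(1-3) by blast
  ultimately have "{c, c'} = {x, y}" by blast
  then show ?thesis using axy by (simp add: adj_def)
qed

lemma acyclic_KBe_raw: "acyclic_graph (KBe_raw G)"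
proof (rule acyclic_graph_inj_hom[OF ac, of biclique_centre])
  show "inj_on biclique_centre (verts (KBe_raw G))"
    using inj_on_biclique_centre by (simp add: KBe_raw_def verts_def)
  show "biclique_centre ` verts (KBe_raw G) \<subseteq> verts G"
    using biclique_centre_in_verts by (auto simp: KBe_raw_def verts_def)
  fix S S' assume "adj (KBe_raw G) S S'"
  then obtain T T' where "{S, S'} = {T, T'}" "T \<noteq> T'" "is_biclique G T" "is_biclique G T'"
    "share_edge G T T'"
    unfolding adj_def KBe_raw_def edges_def by auto
  then show "adj G (biclique_centre S) (biclique_centre S')"
    using biclique_centre(1) share_edge_centres_adj adj_commute
    unfolding doubleton_eq_iff share_edge_def by metis
qed

text \<open>A leaf \<open>l\<close> with neighbour \<open>u\<close> cannot be a centre together with \<open>u\<close>: its star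
  \<open>{l, u}\<close> would be properly contained in the star of \<open>u\<close>.\<close>

lemma card_bicliques_less:
  assumes "verts G \<noteq> {}"
  shows "card {S. is_biclique G S} < card (verts G)"
proof -
  let ?C = "biclique_centre ` {S. is_biclique G S}"
  have "\<exists>w\<in>verts G. w \<notin> ?C"
  proof (cases "edges G = {}")
    case True
    then have "{S. is_biclique G S} = {}" using biclique_centre(2) unfolding adj_def by blast
    then show ?thesis using assms by auto
  next
    case False
    obtain l u where lu: "adj G l u" "\<forall>x. adj G l x \<longrightarrow> x = u" using exists_leaf[OF False] by blast
    have "\<not> (l \<in> ?C \<and> u \<in> ?C)"
    proof
      assume "l \<in> ?C \<and> u \<in> ?C"
      then obtain S S' where S: "is_biclique G S" "l = biclique_centre S"
        and S': "is_biclique G S'" "u = biclique_centre S'" by blast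
      have SN: "S = closed_nbhd G l" "S' = closed_nbhd G u"
        using biclique_centre(1) S S' by blast+
      have "{x. adj G l x} = {u}" using lu by blast
      then have "S = {l, u}" unfolding SN closed_nbhd_def by simp
      moreover have "l \<in> S'" using lu(1) unfolding SN closed_nbhd_def by (simp add: adj_commute)
      moreover have "u \<in> S'" unfolding SN closed_nbhd_def by simp
      ultimately have "S \<subseteq> S'" by simp
      moreover have "S \<noteq> S'" using S S' lu(1) adj_irrefl[OF wf] by auto
      ultimately show False using S S' unfolding is_biclique_def by blast
    qed
    then show ?thesis using lu adj_in_verts[OF wf] by blast
  qed
  then have "?C \<subset> verts G" using biclique_centre_in_verts by blast
  then have "card ?C < card (verts G)" by (simp add: psubset_card_mono finite_verts[OF wf])
  then show ?thesis using card_image[OF inj_on_biclique_centre] by simp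
qed

end

section \<open>Relabelling and the operator \<open>KBe\<close>\<close>

lemma wf_graph_map_graph:
  assumes "wf_graph H" "inj_on f (verts H)"
  shows "wf_graph (map_graph f H)"
  using assms unfolding wf_graph_def map_graph_def verts_def edges_def inj_on_def
  by fastforce

lemma adj_map_graph_iff:
  assumes wf: "wf_graph H" and inj: "inj_on f (verts H)" and "x \<in> verts H" "y \<in> verts H"
  shows "adj (map_graph f H) (f x) (f y) \<longleftrightarrow> adj H x y"
proof
  assume "adj (map_graph f H) (f x) (f y)"
  then obtain e where e: "e \<in> edges H" "{f x, f y} = f ` e"
    unfolding adj_def map_graph_def edges_def by auto
  obtain u v where uv: "e = {u, v}" "u \<in> verts H" "v \<in> verts H"
    using edgeE[OF wf e(1)] by metis
  have "{f x, f y} = {f u, f v}" using e uv by simp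
  then have "{x, y} = {u, v}"
    using inj assms(3,4) uv unfolding doubleton_eq_iff inj_on_def by metis
  then show "adj H x y" using e uv adj_def by metis
next
  assume "adj H x y"
  then have "f ` {x, y} \<in> (\<lambda>e. f ` e) ` edges H" unfolding adj_def by blast
  then show "adj (map_graph f H) (f x) (f y)" by (simp add: adj_def map_graph_def edges_def)
qed

lemma acyclic_graph_map_graph:
  assumes wf: "wf_graph H" and inj: "inj_on f (verts H)" and ac: "acyclic_graph H"
  shows "acyclic_graph (map_graph f H)"
proof (rule acyclic_graph_inj_hom[OF ac, of "the_inv_into (verts H) f"])
  have V: "verts (map_graph f H) = f ` verts H" by (simp add: map_graph_def verts_def)
  show "inj_on (the_inv_into (verts H) f) (verts (map_graph f H))"
    unfolding V using inj by (rule inj_on_the_inv_into)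
  show "the_inv_into (verts H) f ` verts (map_graph f H) \<subseteq> verts H"
    unfolding V using inj by (auto intro: the_inv_into_into)
  fix x y assume "x \<in> verts (map_graph f H)" "y \<in> verts (map_graph f H)"
    "adj (map_graph f H) x y"
  then show "adj H (the_inv_into (verts H) f x) (the_inv_into (verts H) f y)"
    unfolding V using adj_map_graph_iff[OF wf inj] inj
    by (auto simp: the_inv_into_f_f)
qed

lemma inj_on_enc: "inj_on enc (Collect finite)"
  using inj_on_set_encode by (simp add: enc_def[abs_def] set_encode_def)

lemma biclique_subset_verts: "is_biclique G S \<Longrightarrow> S \<subseteq> verts G"
  by (simp add: is_biclique_def induces_complete_bipartite_def)

lemma finite_biclique: "wf_graph G \<Longrightarrow> is_biclique G S \<Longrightarrow> finite S"
  using finite_subset[OF biclique_subset_verts finite_verts] .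

lemma finite_bicliques: "wf_graph G \<Longrightarrow> finite {S. is_biclique G S}"
  by (rule finite_subset[of _ "Pow (verts G)"]) (auto dest: biclique_subset_verts simp: finite_verts)

lemma wf_graph_KBe_raw:
  assumes "wf_graph G"
  shows "wf_graph (KBe_raw G)"
proof -
  have "finite {S. is_biclique G S}" using finite_bicliques[OF assms] .
  then show ?thesis unfolding wf_graph_def KBe_raw_def verts_def edges_def by auto
qed

lemma inj_on_enc_verts_KBe_raw: "wf_graph G \<Longrightarrow> inj_on enc (verts (KBe_raw G))"
  by (rule inj_on_subset[OF inj_on_enc]) (auto simp: KBe_raw_def verts_def finite_biclique)

lemma wf_graph_KBe: "wf_graph G \<Longrightarrow> wf_graph (KBe G)"
  unfolding KBe_def by (intro wf_graph_map_graph wf_graph_KBe_raw inj_on_enc_verts_KBe_raw)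

lemma card_verts_KBe: "wf_graph G \<Longrightarrow> card (verts (KBe G)) = card {S. is_biclique G S}"
  using card_image[OF inj_on_enc_verts_KBe_raw]
  by (simp add: KBe_def KBe_raw_def map_graph_def verts_def)

lemma acyclic_graph_KBe: "wf_graph G \<Longrightarrow> acyclic_graph G \<Longrightarrow> acyclic_graph (KBe G)"
  unfolding KBe_def
  by (intro acyclic_graph_map_graph wf_graph_KBe_raw inj_on_enc_verts_KBe_raw acyclic_KBe_raw)

lemma verts_KBe: "verts (KBe G) = enc ` {S. is_biclique G S}"
  by (simp add: KBe_def KBe_raw_def map_graph_def verts_def)

lemma KBe_empty_graph: "empty_graph G \<Longrightarrow> empty_graph (KBe G)"
  unfolding empty_graph_def verts_KBe is_biclique_def induces_complete_bipartite_def by blast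

lemma empty_graph_funpow_KBe: "empty_graph G \<Longrightarrow> empty_graph ((KBe ^^ k) G)"
  by (induction k) (simp_all add: KBe_empty_graph)

lemma empty_graph_KBe_iterate:
  "wf_graph G \<Longrightarrow> acyclic_graph G \<Longrightarrow> card (verts G) \<le> k \<Longrightarrow> empty_graph ((KBe ^^ k) G)"
proof (induction k arbitrary: G)
  case 0
  then show ?case using finite_verts[OF "0.prems"(1)] by (simp add: empty_graph_def)
next
  case (Suc k)
  show ?case
  proof (cases "empty_graph G")
    case True
    then show ?thesis by (rule empty_graph_funpow_KBe)
  next
    case False
    then have "card (verts (KBe G)) \<le> k"
      using card_bicliques_less[OF Suc.prems(1,2)] card_verts_KBe[OF Suc.prems(1)] Suc.prems(3)
      by (simp add: empty_graph_def)
    then show ?thesis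
      using Suc.IH[OF wf_graph_KBe acyclic_graph_KBe] Suc.prems(1,2)
      by (simp add: funpow_Suc_right del: funpow.simps)
  qed
qed

theorem mainTheorem8:
  fixes T :: "nat graph"
  assumes "is_tree T"
  shows "\<exists>m. \<forall>k\<ge>m. empty_graph ((KBe ^^ k) T)"
  using empty_graph_KBe_iterate assms unfolding is_tree_def by blast

end
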